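(* Let $w\geqslant2$ and $h=2^d$ with $d\in\mathbb{N}$. Then $r(\mathcal{H}_{h,w})=h$, where $\mathcal{H}_{h,w}$ is the set of fast Hough transform patterns on the $h\times w$ image.
   Context: Image: the set $I$ of $wh$ pixels $p_{ij}$, $i=0,\dots,h-1$ (row, counted from the bottom), $j=0,\dots,w-1$ (column). A pattern is a nonempty subset of $I$; a pattern set is a nonempty set of distinct patterns. For a pattern set $\mathcal{T}$, its intersection area is $S(\mathcal{T})=|\mathcal{T}|\cdot\bigl|\bigcap_{T\in\mathcal{T}}T\bigr|$ and its self-intersection measure is $r(\mathcal{T})=\max_{\varnothing\neq\mathcal{R}\subseteq\mathcal{T}}S(\mathcal{R})$. FHT patterns: for a pattern $T$ containing exactly one pixel in each of its rows, let $\Delta(T)=(j_{top}-j_{bot})\bmod w$, where $j_{top},j_{bot}$ are the column indices of the topmost and bottommost pixels of $T$, and let $\mathit{tran}_{a,b}(T)=\{p_{i+a,\,(j+b)\bmod w}\mid p_{ij}\in T\}$. Define $\mathcal{H}_0=\{\{p_{00}\},\{p_{01}\},\dots,\{p_{0,w-1}\}\}$ and, for $k=1,\dots,d$, $\mathcal{H}_k=\{T\cup\mathit{tran}_{2^{k-1},\,\Delta(T)+s}(T)\mid T\in\mathcal{H}_{k-1},\ s\in\{0,1\}\}$; $\mathcal{H}_{h,w}=\mathcal{H}_d$. *)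

theory Defs
  imports Main
begin

text \<open>A pixel p_ij is the pair (i, j): i = row (counted from the bottom), j = column.\<close>
type_synonym pixel = "nat \<times> nat"

definition image :: "nat \<Rightarrow> nat \<Rightarrow> pixel set" where
  "image h w = {0..<h} \<times> {0..<w}"

definition inter_area :: "pixel set set \<Rightarrow> nat" where
  "inter_area \<T> = card \<T> * card (\<Inter>\<T>)"

definition self_inter :: "pixel set set \<Rightarrow> nat" where
  "self_inter \<T> = Max {inter_area \<R> | \<R>. \<R> \<subseteq> \<T> \<and> \<R> \<noteq> {}}"

definition col :: "pixel set \<Rightarrow> nat \<Rightarrow> nat" where
  "col T i = (THE j. (i, j) \<in> T)"

definition Delta :: "nat \<Rightarrow> pixel set \<Rightarrow> nat" where
  "Delta w T = nat ((int (col T (Max (fst ` T))) - int (col T (Min (fst ` T)))) mod int w)"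

definition tran :: "nat \<Rightarrow> nat \<Rightarrow> nat \<Rightarrow> pixel set \<Rightarrow> pixel set" where
  "tran w a b T = {(i + a, (j + b) mod w) | i j. (i, j) \<in> T}"

fun FHT :: "nat \<Rightarrow> nat \<Rightarrow> pixel set set" where
  "FHT w 0 = {{(0, j)} | j. j < w}"
| "FHT w (Suc k) = {T \<union> tran w (2 ^ k) (Delta w T + s) T | T s. T \<in> FHT w k \<and> s \<in> {0, 1}}"

end

theory Submission
  imports Defs
begin

(*
  A pattern of H_{k+1} is T together with a copy of T placed on top of it and shifted
  cyclically by Delta(T) + s columns, where T is in H_k and s is 0 or 1. Its lower half is T
  and its upper half, a cyclic shift of T, again lies in H_k. For a family R in H_{k+1} the
  common part of R therefore splits into the common part of the lower halves L and that of
  the upper halves U. Each half is the half of at most two patterns of R, so |R| <= 2|L| and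
  |R| <= 2|U|; this settles the case that one of the two common parts is empty. If both are
  nonempty, both half maps are injective on R, because for w >= 2 shifts of a pattern by
  c and c + 1 columns are disjoint. Then S(R) = S(L) + S(U) <= 2^k + 2^k by induction,
  and a single pattern attains 2^(k+1).
*)

definition row_pattern :: "nat \<Rightarrow> nat \<Rightarrow> pixel set \<Rightarrow> bool" where
  "row_pattern h w T \<longleftrightarrow> T \<subseteq> image h w \<and> (\<forall>i<h. \<exists>!j. (i, j) \<in> T)"

lemma row_pattern_memD: "row_pattern h w T \<Longrightarrow> (i, j) \<in> T \<Longrightarrow> i < h \<and> j < w"
  unfolding row_pattern_def image_def by auto

lemma row_pattern_ex: "row_pattern h w T \<Longrightarrow> i < h \<Longrightarrow> \<exists>j. (i, j) \<in> T"
  unfolding row_pattern_def by blast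

lemma row_pattern_unique:
  assumes "row_pattern h w T" "(i, j) \<in> T" "(i, j') \<in> T"
  shows "j = j'"
proof -
  have "\<forall>i<h. \<exists>!j. (i, j) \<in> T"
    using assms(1) unfolding row_pattern_def by (rule conjunct2)
  then have "\<exists>!j. (i, j) \<in> T"
    using row_pattern_memD[OF assms(1,2)] by blast
  then show ?thesis
    using assms(2,3) by blast
qed

lemma row_patternI:
  assumes "\<And>i j. (i, j) \<in> T \<Longrightarrow> i < h \<and> j < w"
    and "\<And>i. i < h \<Longrightarrow> \<exists>j. (i, j) \<in> T"
    and "\<And>i j j'. (i, j) \<in> T \<Longrightarrow> (i, j') \<in> T \<Longrightarrow> j = j'"
  shows "row_pattern h w T"
proof -
  have "T \<subseteq> image h w"
    using assms(1) by (force simp: image_def)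
  moreover have "\<exists>!j. (i, j) \<in> T" if "i < h" for i
    using assms(2)[OF that] assms(3) by blast
  ultimately show ?thesis
    unfolding row_pattern_def by blast
qed

lemma col_eq:
  assumes "row_pattern h w T" "(i, j) \<in> T"
  shows "col T i = j"
  unfolding col_def by (rule the_equality) (fact assms(2), rule row_pattern_unique[OF assms(1) _ assms(2)])

lemma fst_image_row_pattern:
  assumes "row_pattern h w T"
  shows "fst ` T = {0..<h}"
proof
  show "fst ` T \<subseteq> {0..<h}"
    using row_pattern_memD[OF assms] by auto
  show "{0..<h} \<subseteq> fst ` T"
  proof
    fix i assume "i \<in> {0..<h}"
    then obtain j where "(i, j) \<in> T" using row_pattern_ex[OF assms] by auto
    then show "i \<in> fst ` T" by force
  qed
qed

lemma finite_row_pattern: "row_pattern h w T \<Longrightarrow> finite T"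
  unfolding row_pattern_def image_def by (meson finite_SigmaI finite_atLeastLessThan finite_subset)

lemma card_row_pattern:
  assumes "row_pattern h w T"
  shows "card T = h"
proof -
  have "inj_on fst T"
    unfolding inj_on_def by (auto intro: row_pattern_unique[OF assms])
  then show ?thesis
    using card_image fst_image_row_pattern[OF assms] by fastforce
qed

lemma mem_tran_iff:
  "(x, y) \<in> tran w a b S \<longleftrightarrow> a \<le> x \<and> (\<exists>j. (x - a, j) \<in> S \<and> y = (j + b) mod w)"
  unfolding tran_def by force

lemma tran_tran: "tran w a b (tran w a' b' T) = tran w (a' + a) (b' + b) T"
  unfolding tran_def by (force simp: mod_add_left_eq add.assoc)

lemma tran_Un: "tran w a b (X \<union> Y) = tran w a b X \<union> tran w a b Y"
  unfolding tran_def by blast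

lemma tran_mod_eq_0:
  assumes "row_pattern h w T" "b mod w = 0"
  shows "tran w 0 b T = T"
proof -
  have "(j + b) mod w = j" if "(i, j) \<in> T" for i j
    using row_pattern_memD[OF assms(1) that] assms(2) by (simp add: mod_add_right_eq[symmetric])
  then show ?thesis
    unfolding tran_def by force
qed

lemma tran_unshift:
  assumes "row_pattern h w T" "w > 0"
  shows "tran w 0 (w - c mod w) (tran w 0 c T) = T"
proof -
  have "c + (w - c mod w) = c div w * w + w"
    using assms(2) div_mult_mod_eq[of c w] mod_less_divisor[of w c] by linarith
  then have "(c + (w - c mod w)) mod w = 0"
    by simp
  then show ?thesis
    by (simp add: tran_tran tran_mod_eq_0[OF assms(1)])
qed

lemma row_pattern_tran:
  assumes "w > 0" "row_pattern h w T"
  shows "row_pattern h w (tran w 0 c T)"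
proof (rule row_patternI)
  show "i < h \<and> j < w" if "(i, j) \<in> tran w 0 c T" for i j
    using that assms by (auto simp: mem_tran_iff dest: row_pattern_memD)
  show "\<exists>j. (i, j) \<in> tran w 0 c T" if "i < h" for i
    using row_pattern_ex[OF assms(2) that] by (auto simp: mem_tran_iff)
  show "j = j'" if "(i, j) \<in> tran w 0 c T" "(i, j') \<in> tran w 0 c T" for i j j'
    using that by (auto simp: mem_tran_iff dest: row_pattern_unique[OF assms(2)])
qed

lemma tran_inj:
  assumes "w > 0" "row_pattern h w A" "row_pattern h w A'" "tran w 0 c A = tran w 0 c A'"
  shows "A = A'"
proof -
  have "A = tran w 0 (w - c mod w) (tran w 0 c A)"
    using tran_unshift[OF assms(2,1)] by simp
  also have "\<dots> = A'"
    using assms(4) tran_unshift[OF assms(3,1)] by simp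
  finally show ?thesis .
qed

lemma row_pattern_double:
  assumes "w > 0" "row_pattern h w T"
  shows "row_pattern (h + h) w (T \<union> tran w h b T)"
proof (rule row_patternI)
  show "i < h + h \<and> j < w" if "(i, j) \<in> T \<union> tran w h b T" for i j
    using that assms by (auto simp: mem_tran_iff dest: row_pattern_memD)
  show "\<exists>j. (i, j) \<in> T \<union> tran w h b T" if "i < h + h" for i
  proof (cases "i < h")
    case False
    then have "i - h < h" using that by simp
    then obtain j where "(i - h, j) \<in> T" using row_pattern_ex[OF assms(2)] by blast
    then show ?thesis using False by (auto simp: mem_tran_iff)
  qed (use row_pattern_ex[OF assms(2)] in blast)
  show "j = j'" if "(i, j) \<in> T \<union> tran w h b T" "(i, j') \<in> T \<union> tran w h b T" for i j j'
  proof (cases "i < h")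
    case True
    then have "(i, j) \<in> T" "(i, j') \<in> T" using that by (auto simp: mem_tran_iff)
    then show ?thesis by (rule row_pattern_unique[OF assms(2)])
  next
    case False
    then have "(i, j) \<in> tran w h b T" "(i, j') \<in> tran w h b T"
      using that row_pattern_memD[OF assms(2)] by auto
    then show ?thesis by (auto simp: mem_tran_iff dest: row_pattern_unique[OF assms(2)])
  qed
qed

lemma Delta_tran:
  assumes "w > 0" "h > 0" "row_pattern h w T"
  shows "Delta w (tran w 0 c T) = Delta w T"
proof -
  let ?T = "tran w 0 c T"
  have T': "row_pattern h w ?T" using row_pattern_tran assms by blast
  have rows: "Max (fst ` ?T) = h - 1" "Min (fst ` ?T) = 0"
    "Max (fst ` T) = h - 1" "Min (fst ` T) = 0"
    using assms(2) fst_image_row_pattern[OF T'] fst_image_row_pattern[OF assms(3)]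
    by (auto intro!: Max_eqI Min_eqI)
  obtain a b where ab: "(h - 1, a) \<in> T" "(0, b) \<in> T"
    using assms(2) row_pattern_ex[OF assms(3)] by (metis diff_less zero_less_one)
  then have "(h - 1, (a + c) mod w) \<in> ?T" "(0, (b + c) mod w) \<in> ?T"
    by (auto simp: mem_tran_iff)
  then have "Delta w ?T = nat ((int ((a + c) mod w) - int ((b + c) mod w)) mod int w)"
    unfolding Delta_def rows using col_eq[OF T'] by simp
  also have "\<dots> = nat (((int a + int c) mod int w - (int b + int c) mod int w) mod int w)"
    by (simp add: zmod_int)
  also have "\<dots> = nat ((int a - int b) mod int w)"
    by (simp add: mod_diff_eq)
  also have "\<dots> = Delta w T"
    unfolding Delta_def rows using col_eq[OF assms(3) ab(1)] col_eq[OF assms(3) ab(2)] by simp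
  finally show ?thesis .
qed

lemma tran_Suc_disjoint:
  assumes "w \<ge> 2" "row_pattern h w T"
  shows "tran w 0 a T \<inter> tran w 0 (Suc a) T = {}"
proof -
  have False if y: "(i, y) \<in> tran w 0 a T" "(i, y) \<in> tran w 0 (Suc a) T" for i y
  proof -
    obtain j where j: "(i, j) \<in> T" "y = (j + a) mod w"
      using y(1) by (auto simp: mem_tran_iff)
    obtain j' where j': "(i, j') \<in> T" "y = (j' + Suc a) mod w"
      using y(2) by (auto simp: mem_tran_iff)
    have "j = j'" using row_pattern_unique[OF assms(2) j(1) j'(1)] .
    then show False
      using j(2) j'(2) assms(1) by (auto simp: mod_Suc split: if_splits)
  qed
  then show ?thesis by auto
qed

lemma disjoint_if_tran_eq_tran_Suc:
  assumes "w \<ge> 2" "row_pattern h w A" "row_pattern h w A'" "tran w 0 a A = tran w 0 (Suc a) A'"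
  shows "A \<inter> A' = {}"
proof -
  have w: "w > 0" using assms(1) by simp
  have "tran w 0 a A = tran w 0 a (tran w 0 1 A')"
    using assms(4) by (simp add: tran_tran)
  then have "A = tran w 0 1 A'"
    using tran_inj[OF w assms(2) row_pattern_tran[OF w assms(3)]] by blast
  then show ?thesis
    using tran_Suc_disjoint[OF assms(1,3), of 0] tran_mod_eq_0[OF assms(3), of 0] by auto
qed

definition lower_rows :: "nat \<Rightarrow> pixel set \<Rightarrow> pixel set" where
  "lower_rows h P = {p \<in> P. fst p < h}"

definition upper_rows :: "nat \<Rightarrow> pixel set \<Rightarrow> pixel set" where
  "upper_rows h P = {(i, j). (i + h, j) \<in> P}"

lemma card_lower_upper_rows:
  assumes "finite X"
  shows "card X = card (lower_rows h X) + card (upper_rows h X)"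
proof -
  let ?up = "\<lambda>(i, j). (i + h, j)"
  have "?up ` upper_rows h X = X - {p. fst p < h}"
  proof
    show "?up ` upper_rows h X \<subseteq> X - {p. fst p < h}"
      by (auto simp: upper_rows_def)
    show "X - {p. fst p < h} \<subseteq> ?up ` upper_rows h X"
    proof
      fix p assume p: "p \<in> X - {p. fst p < h}"
      obtain i j where ij: "p = (i, j)" by fastforce
      have "p = ?up (i - h, j)" "(i - h, j) \<in> upper_rows h X"
        using p by (auto simp: ij upper_rows_def)
      then show "p \<in> ?up ` upper_rows h X" by (rule image_eqI)
    qed
  qed
  moreover have "inj_on ?up (upper_rows h X)"
    by (auto simp: inj_on_def)
  moreover have "lower_rows h X = X \<inter> {p. fst p < h}"
    by (auto simp: lower_rows_def)
  ultimately show ?thesis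
    using card_Int_Diff[OF assms, of "{p. fst p < h}"] card_image by metis
qed

lemma Inter_lower_rows: "R \<noteq> {} \<Longrightarrow> \<Inter>(lower_rows h ` R) = lower_rows h (\<Inter>R)"
  by (auto simp: lower_rows_def)

lemma Inter_upper_rows: "R \<noteq> {} \<Longrightarrow> \<Inter>(upper_rows h ` R) = upper_rows h (\<Inter>R)"
  by (auto simp: upper_rows_def)

lemma lower_rows_Un_tran: "row_pattern h w T \<Longrightarrow> lower_rows h (T \<union> tran w h b T) = T"
  by (auto simp: lower_rows_def mem_tran_iff dest: row_pattern_memD)

lemma upper_rows_Un_tran:
  assumes "row_pattern h w T"
  shows "upper_rows h (T \<union> tran w h b T) = tran w 0 b T"
proof -
  have "(i + h, j) \<notin> T" for i j
    using row_pattern_memD[OF assms] by auto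
  then show ?thesis
    by (auto simp: upper_rows_def mem_tran_iff)
qed

lemma tran_01_disjoint:
  assumes "w \<ge> 2" "row_pattern h w T" "s \<in> {0, 1}" "s' \<in> {0, 1}" "s \<noteq> s'"
  shows "tran w 0 (a + s) T \<inter> tran w 0 (a + s') T = {}"
  using assms(3-5) tran_Suc_disjoint[OF assms(1,2), of a] by (auto simp: Int_commute)

lemma tran_eq_tran_01:
  assumes "w \<ge> 2" "row_pattern h w A" "row_pattern h w A'" "s \<in> {0, 1}" "s' \<in> {0, 1}"
    and "tran w 0 (a + s) A = tran w 0 (a + s') A'"
  shows "A = A' \<and> s = s' \<or> A \<inter> A' = {}"
proof (cases "s = s'")
  case True
  then show ?thesis
    using assms(1,6) tran_inj[OF _ assms(2,3)] by simp
next
  case False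
  then have "s = 0 \<and> s' = 1 \<or> s = 1 \<and> s' = 0"
    using assms(4,5) by auto
  then have "A \<inter> A' = {}"
  proof
    assume "s = 0 \<and> s' = 1"
    then show ?thesis
      using assms(6) disjoint_if_tran_eq_tran_Suc[OF assms(1,2,3), of a] by simp
  next
    assume "s = 1 \<and> s' = 0"
    then have "A' \<inter> A = {}"
      using assms(6) disjoint_if_tran_eq_tran_Suc[OF assms(1,3,2), of a] by simp
    then show ?thesis by blast
  qed
  then show ?thesis ..
qed

definition fht_step :: "nat \<Rightarrow> nat \<Rightarrow> pixel set \<Rightarrow> nat \<Rightarrow> pixel set" where
  "fht_step w k T s = T \<union> tran w (2 ^ k) (Delta w T + s) T"

lemma FHT_SucE:
  assumes "P \<in> FHT w (Suc k)"
  obtains T s where "P = fht_step w k T s" "T \<in> FHT w k" "s \<in> {0, 1}"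
  using assms unfolding fht_step_def by auto

lemma fht_step_in_FHT: "T \<in> FHT w k \<Longrightarrow> s \<in> {0, 1} \<Longrightarrow> fht_step w k T s \<in> FHT w (Suc k)"
  unfolding fht_step_def by auto

lemma row_pattern_FHT:
  assumes "w > 0" "T \<in> FHT w k"
  shows "row_pattern (2 ^ k) w T"
  using assms(2)
proof (induction k arbitrary: T)
  case 0
  then obtain j where "T = {(0, j)}" "j < w" by auto
  then show ?case by (auto intro: row_patternI)
next
  case (Suc k)
  then obtain T' s where "T = fht_step w k T' s" "T' \<in> FHT w k"
    by (blast elim: FHT_SucE)
  then show ?case
    using row_pattern_double[OF assms(1) Suc.IH] by (simp add: fht_step_def mult_2)
qed

lemma finite_FHT:
  assumes "w > 0"
  shows "finite (FHT w k)"
proof -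
  have "FHT w k \<subseteq> Pow (image (2 ^ k) w)"
    using row_pattern_FHT[OF assms] unfolding row_pattern_def by blast
  then show ?thesis
    by (rule finite_subset) (simp add: image_def)
qed

lemma FHT_nonempty: "w > 0 \<Longrightarrow> FHT w k \<noteq> {}"
  by (induction k) (auto dest: fht_step_in_FHT[of _ w _ 0])

lemma tran_fht_step:
  assumes "w > 0" "row_pattern (2 ^ k) w T"
  shows "tran w 0 c (fht_step w k T s) = fht_step w k (tran w 0 c T) s"
  using Delta_tran[OF assms(1) _ assms(2)]
  by (simp add: fht_step_def tran_Un tran_tran ac_simps)

lemma tran_in_FHT: "w > 0 \<Longrightarrow> T \<in> FHT w k \<Longrightarrow> tran w 0 c T \<in> FHT w k"
proof (induction k arbitrary: T)
  case 0
  then obtain j where "T = {(0, j)}" by auto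
  then have "tran w 0 c T = {(0, (j + c) mod w)}" by (auto simp: tran_def)
  then show ?case using \<open>w > 0\<close> by auto
next
  case (Suc k)
  then obtain T' s where T: "T = fht_step w k T' s" "T' \<in> FHT w k" "s \<in> {0, 1}"
    by (blast elim: FHT_SucE)
  then have "tran w 0 c T = fht_step w k (tran w 0 c T') s"
    using tran_fht_step[OF Suc.prems(1) row_pattern_FHT[OF Suc.prems(1)]] by simp
  then show ?case
    using fht_step_in_FHT[OF Suc.IH[OF Suc.prems(1) T(2)] T(3)] by simp
qed

lemma lower_rows_fht_step:
  assumes "w > 0" "T \<in> FHT w k"
  shows "lower_rows (2 ^ k) (fht_step w k T s) = T"
  unfolding fht_step_def using row_pattern_FHT[OF assms] by (rule lower_rows_Un_tran)

lemma upper_rows_fht_step: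
  assumes "w > 0" "T \<in> FHT w k"
  shows "upper_rows (2 ^ k) (fht_step w k T s) = tran w 0 (Delta w T + s) T"
  unfolding fht_step_def using row_pattern_FHT[OF assms] by (rule upper_rows_Un_tran)

lemma lower_rows_FHT_Suc:
  assumes "w > 0" "P \<in> FHT w (Suc k)"
  shows "lower_rows (2 ^ k) P \<in> FHT w k"
  using assms(2) by (rule FHT_SucE) (simp add: lower_rows_fht_step[OF assms(1)])

lemma upper_rows_FHT_Suc:
  assumes "w > 0" "P \<in> FHT w (Suc k)"
  shows "upper_rows (2 ^ k) P \<in> FHT w k"
  using assms(2) by (rule FHT_SucE) (simp add: upper_rows_fht_step[OF assms(1)] tran_in_FHT[OF assms(1)])

lemma card_le_twice_lower_rows:
  assumes "w > 0" "R \<subseteq> FHT w (Suc k)"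
  shows "card R \<le> 2 * card (lower_rows (2 ^ k) ` R)"
proof -
  let ?L = "lower_rows (2 ^ k) ` R"
  have "finite ?L"
    using assms finite_FHT finite_subset by blast
  moreover have "R \<subseteq> (\<lambda>(T, s). fht_step w k T s) ` (?L \<times> {0, 1})"
  proof
    fix P assume "P \<in> R"
    with assms(2) obtain T s where P: "P = fht_step w k T s" "T \<in> FHT w k" "s \<in> {0, 1}"
      by (blast elim: FHT_SucE)
    then have "T \<in> ?L"
      using \<open>P \<in> R\<close> lower_rows_fht_step[OF assms(1)] by force
    then show "P \<in> (\<lambda>(T, s). fht_step w k T s) ` (?L \<times> {0, 1})"
      using P by force
  qed
  ultimately have "card R \<le> card (?L \<times> {0, 1 :: nat})"
    by (intro surj_card_le) auto
  then show ?thesis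
    by (simp add: card_cartesian_product)
qed

lemma card_le_twice_upper_rows:
  assumes "w > 0" "R \<subseteq> FHT w (Suc k)"
  shows "card R \<le> 2 * card (upper_rows (2 ^ k) ` R)"
proof -
  let ?U = "upper_rows (2 ^ k) ` R"
  \<comment> \<open>The upper half X of P = fht_step w k T s has the same Delta as T, so T is X shifted back.\<close>
  let ?parent = "\<lambda>(X, s). fht_step w k (tran w 0 (w - (Delta w X + s) mod w) X) s"
  have "finite ?U"
    using assms finite_FHT finite_subset by blast
  moreover have "R \<subseteq> ?parent ` (?U \<times> {0, 1})"
  proof
    fix P assume "P \<in> R"
    with assms(2) obtain T s where P: "P = fht_step w k T s" "T \<in> FHT w k" "s \<in> {0, 1}"
      by (blast elim: FHT_SucE)
    define X where "X = tran w 0 (Delta w T + s) T"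
    have T: "row_pattern (2 ^ k) w T"
      using row_pattern_FHT[OF assms(1) P(2)] .
    have "Delta w X = Delta w T"
      unfolding X_def using Delta_tran[OF assms(1) _ T] by simp
    then have "?parent (X, s) = P"
      using tran_unshift[OF T assms(1)] P(1) X_def by simp
    moreover have "X \<in> ?U"
      using \<open>P \<in> R\<close> upper_rows_fht_step[OF assms(1) P(2)] P(1) X_def by force
    ultimately show "P \<in> ?parent ` (?U \<times> {0, 1})"
      using P(3) by force
  qed
  ultimately have "card R \<le> card (?U \<times> {0, 1 :: nat})"
    by (intro surj_card_le) auto
  then show ?thesis
    by (simp add: card_cartesian_product)
qed

lemma inj_on_lower_rows_FHT:
  assumes "w \<ge> 2" "R \<subseteq> FHT w (Suc k)" "\<Inter>(upper_rows (2 ^ k) ` R) \<noteq> {}"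
  shows "inj_on (lower_rows (2 ^ k)) R"
proof (rule inj_onI)
  fix P1 P2 assume P: "P1 \<in> R" "P2 \<in> R" "lower_rows (2 ^ k) P1 = lower_rows (2 ^ k) P2"
  have w: "w > 0" using assms(1) by simp
  obtain T1 s1 where 1: "P1 = fht_step w k T1 s1" "T1 \<in> FHT w k" "s1 \<in> {0, 1}"
    using P(1) assms(2) by (blast elim: FHT_SucE)
  obtain T2 s2 where 2: "P2 = fht_step w k T2 s2" "T2 \<in> FHT w k" "s2 \<in> {0, 1}"
    using P(2) assms(2) by (blast elim: FHT_SucE)
  have "T1 = T2"
    using P(3) 1 2 lower_rows_fht_step[OF w] by metis
  moreover have "s1 = s2"
  proof (rule ccontr)
    assume "s1 \<noteq> s2"
    have "\<Inter>(upper_rows (2 ^ k) ` R) \<subseteq> upper_rows (2 ^ k) P1 \<inter> upper_rows (2 ^ k) P2"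
      using P by blast
    also have "\<dots> = {}"
      using 1 2 \<open>T1 = T2\<close> \<open>s1 \<noteq> s2\<close> upper_rows_fht_step[OF w]
        tran_01_disjoint[OF assms(1) row_pattern_FHT[OF w]] by simp
    finally show False using assms(3) by blast
  qed
  ultimately show "P1 = P2" using 1 2 by simp
qed

lemma inj_on_upper_rows_FHT:
  assumes "w \<ge> 2" "R \<subseteq> FHT w (Suc k)" "\<Inter>(lower_rows (2 ^ k) ` R) \<noteq> {}"
  shows "inj_on (upper_rows (2 ^ k)) R"
proof (rule inj_onI)
  fix P1 P2 assume P: "P1 \<in> R" "P2 \<in> R" "upper_rows (2 ^ k) P1 = upper_rows (2 ^ k) P2"
  have w: "w > 0" using assms(1) by simp
  obtain T1 s1 where 1: "P1 = fht_step w k T1 s1" "T1 \<in> FHT w k" "s1 \<in> {0, 1}"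
    using P(1) assms(2) by (blast elim: FHT_SucE)
  obtain T2 s2 where 2: "P2 = fht_step w k T2 s2" "T2 \<in> FHT w k" "s2 \<in> {0, 1}"
    using P(2) assms(2) by (blast elim: FHT_SucE)
  have T: "row_pattern (2 ^ k) w T1" "row_pattern (2 ^ k) w T2"
    using 1 2 row_pattern_FHT[OF w] by auto
  have shifts: "tran w 0 (Delta w T1 + s1) T1 = tran w 0 (Delta w T2 + s2) T2"
    using P(3) 1 2 upper_rows_fht_step[OF w] by metis
  then have "Delta w T1 = Delta w T2"
    using Delta_tran[OF w _ T(1)] Delta_tran[OF w _ T(2)] by (metis zero_less_numeral zero_less_power)
  then have "T1 = T2 \<and> s1 = s2 \<or> T1 \<inter> T2 = {}"
    using tran_eq_tran_01[OF assms(1) T 1(3) 2(3)] shifts by simp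
  moreover have "\<Inter>(lower_rows (2 ^ k) ` R) \<subseteq> T1 \<inter> T2"
    using P 1 2 lower_rows_fht_step[OF w] by blast
  ultimately show "P1 = P2"
    using assms(3) 1 2 by blast
qed

lemma card_Inter_FHT_Suc:
  assumes "w > 0" "R \<subseteq> FHT w (Suc k)" "R \<noteq> {}"
  shows "card (\<Inter>R) = card (\<Inter>(lower_rows (2 ^ k) ` R)) + card (\<Inter>(upper_rows (2 ^ k) ` R))"
proof -
  obtain P where "P \<in> R" using assms(3) by blast
  then have "finite (\<Inter>R)"
    using assms(1,2) row_pattern_FHT finite_row_pattern by (meson Inter_lower finite_subset subsetD)
  then show ?thesis
    using card_lower_upper_rows Inter_lower_rows[OF assms(3)] Inter_upper_rows[OF assms(3)] by metis
qed

lemma inter_area_FHT_0_le: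
  assumes "R \<subseteq> FHT w 0"
  shows "inter_area R \<le> 1"
proof (cases "R = {} \<or> \<Inter>R = {}")
  case True
  then show ?thesis by (auto simp: inter_area_def)
next
  case False
  then obtain p where p: "p \<in> \<Inter>R" "R \<noteq> {}" by blast
  have "R \<subseteq> {{p}}"
    using assms p(1) by auto
  then have "card R \<le> 1" "card (\<Inter>R) \<le> 1"
    using p(2) card_mono[of "{{p}}" R] card_mono[of "{p}" "\<Inter>R"] by auto
  then show ?thesis
    unfolding inter_area_def using mult_le_mono[of "card R" 1 "card (\<Inter>R)" 1] by simp
qed

lemma inter_area_FHT_le:
  assumes "w \<ge> 2" "R \<subseteq> FHT w k"
  shows "inter_area R \<le> 2 ^ k"
  using assms(2)
proof (induction k arbitrary: R)
  case 0
  from inter_area_FHT_0_le[OF this] show ?case by simp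
next
  case (Suc k)
  have w: "w > 0" using assms(1) by simp
  let ?L = "lower_rows (2 ^ k) ` R" and ?U = "upper_rows (2 ^ k) ` R"
  have "?L \<subseteq> FHT w k" "?U \<subseteq> FHT w k"
    using lower_rows_FHT_Suc[OF w] upper_rows_FHT_Suc[OF w] Suc.prems by blast+
  then have IH: "card ?L * card (\<Inter>?L) \<le> 2 ^ k" "card ?U * card (\<Inter>?U) \<le> 2 ^ k"
    using Suc.IH unfolding inter_area_def by presburger+
  show ?case
  proof (cases "R = {}")
    case False
    then have split: "card (\<Inter>R) = card (\<Inter>?L) + card (\<Inter>?U)"
      by (rule card_Inter_FHT_Suc[OF w Suc.prems])
    consider "\<Inter>?U = {}" | "\<Inter>?L = {}" | "\<Inter>?L \<noteq> {}" "\<Inter>?U \<noteq> {}" by blast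
    then show ?thesis
    proof cases
      case 1
      have "card R * card (\<Inter>R) \<le> 2 * card ?L * card (\<Inter>?L)"
        using split 1 card_le_twice_lower_rows[OF w Suc.prems] by simp
      then show ?thesis
        using IH(1) unfolding inter_area_def by simp
    next
      case 2
      have "card R * card (\<Inter>R) \<le> 2 * card ?U * card (\<Inter>?U)"
        using split 2 card_le_twice_upper_rows[OF w Suc.prems] by simp
      then show ?thesis
        using IH(2) unfolding inter_area_def by simp
    next
      case 3
      have "card ?L = card R" "card ?U = card R"
        using card_image[OF inj_on_lower_rows_FHT[OF assms(1) Suc.prems 3(2)]]
          card_image[OF inj_on_upper_rows_FHT[OF assms(1) Suc.prems 3(1)]] by simp_all
      then show ?thesis
        using IH split unfolding inter_area_def by (simp add: algebra_simps)
    qed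
  qed (simp add: inter_area_def)
qed

theorem lemma1:
  fixes w h d :: nat
  assumes "w \<ge> 2" and "h = 2 ^ d"
  shows "self_inter (FHT w d) = h"
proof -
  have w: "w > 0" using assms(1) by simp
  let ?areas = "{inter_area \<R> | \<R>. \<R> \<subseteq> FHT w d \<and> \<R> \<noteq> {}}"
  obtain T where T: "T \<in> FHT w d"
    using FHT_nonempty[OF w] by blast
  have "inter_area {T} \<in> ?areas"
    using T by blast
  moreover have "inter_area {T} = 2 ^ d"
    unfolding inter_area_def using card_row_pattern[OF row_pattern_FHT[OF w T]] by simp
  ultimately have "2 ^ d \<in> ?areas"
    by simp
  moreover have "finite ?areas"
    using finite_FHT[OF w] by (auto intro: finite_subset[of _ "inter_area ` Pow (FHT w d)"])
  ultimately have "Max ?areas = 2 ^ d"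
    using inter_area_FHT_le[OF assms(1)] by (intro Max_eqI) auto
  then show ?thesis
    unfolding self_inter_def assms(2) .
qed

end
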